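(* Let $p>1$, $N\ge m$, and fix $\varepsilon>0$. For almost all $(A,y)\in\mathbb R^{m\times N}\times\mathbb R^m$ with $\|y\|_2>\varepsilon$, the unique optimal solution $x^*$ of $\min_{x\in\mathbb R^N}\|x\|_p$ subject to $\|Ax-y\|_2\le\varepsilon$ satisfies $|\mathrm{supp}(x^* )|=N$.
   Context: $\|x\|_p:=(\sum_i|x_i|^p)^{1/p}$; $\mathrm{supp}(x)=\{i:x_i\ne0\}$. "For almost all" means outside a set of Lebesgue measure zero. *)

theory Defs
  imports "HOL-Analysis.Analysis"
begin

definition lp_norm :: "real \<Rightarrow> real ^ 'n \<Rightarrow> real" where
  "lp_norm p x = (\<Sum>i\<in>UNIV. \<bar>x $ i\<bar> powr p) powr (1 / p)"

definition supp :: "real ^ 'n \<Rightarrow> 'n set" where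
  "supp x = {i. x $ i \<noteq> 0}"

definition lp_opt :: "real \<Rightarrow> real \<Rightarrow> real ^ 'n ^ 'm \<Rightarrow> real ^ 'm \<Rightarrow> real ^ 'n \<Rightarrow> bool" where
  "lp_opt p eps A y x \<longleftrightarrow>
     norm (A *v x - y) \<le> eps \<and>
     (\<forall>z. norm (A *v z - y) \<le> eps \<longrightarrow> lp_norm p x \<le> lp_norm p z)"

end

theory Submission
  imports Defs
begin

text \<open>
  Since \<open>|t|^p\<close> is strictly convex, the problem has at most one solution, and it has one
  as soon as \<open>Ax = y\<close> is solvable, that is, unless the rows of \<open>A\<close> are dependent.
  When \<open>\<parallel>y\<parallel> > \<epsilon>\<close> the optimum \<open>x\<close> lies on the sphere \<open>\<parallel>Ax - y\<parallel> = \<epsilon>\<close>, and if \<open>x\<^sub>j = 0\<close> then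
  the residual \<open>y - Ax\<close> is orthogonal to column \<open>j\<close> of \<open>A\<close>: otherwise moving \<open>x\<^sub>j\<close> by a small
  \<open>\<tau>\<close> gains of order \<open>\<tau>\<close> in the residual at a cost of only \<open>\<tau>\<^sup>p\<close> in the objective, and
  shrinking the result a little beats \<open>x\<close>.
  Such an \<open>x\<close> also solves the problem restricted to \<open>x\<^sub>j = 0\<close>, which does not involve column
  \<open>j\<close> and has a unique optimal residual; so if column \<open>j\<close> is perturbed by \<open>v\<close>, orthogonality
  confines \<open>v\<close> to a hyperplane. Similarly, if row \<open>i\<close> is perturbed by \<open>w\<close>, dependence of the
  rows confines \<open>w\<close> to an affine subspace of dimension \<open>m - 1 < N\<close>. By Fubini, a Borel set
  meeting every translate of such a linear direction in a null set is null.
\<close>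

section \<open>Convexity of \<open>|t|^p\<close>\<close>

lemma powr_tangent_less:
  fixes p a c :: real
  assumes p: "p > 1" and c: "c > 0" and a: "a \<ge> 0" "a \<noteq> c"
  shows "c powr p + p * c powr (p - 1) * (a - c) < a powr p"
proof -
  define \<phi> where "\<phi> t = t powr p - p * c powr (p - 1) * t" for t :: real
  define \<phi>' where "\<phi>' t = p * t powr (p - 1) - p * c powr (p - 1)" for t :: real
  have der: "(\<phi> has_real_derivative \<phi>' t) (at t)" if "t > 0" for t
    unfolding \<phi>_def \<phi>'_def using that by (auto intro!: derivative_eq_intros)
  have cont: "continuous_on {u..v} \<phi>" if "u \<ge> 0" for u v
    unfolding \<phi>_def using p that
    by (intro continuous_on_diff continuous_on_powr' continuous_intros) auto
  have "\<phi> c < \<phi> a"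
  proof (cases "a < c")
    case True
    show ?thesis
    proof (rule DERIV_neg_imp_decreasing_open[OF True])
      fix t assume "a < t" "t < c"
      then have "t powr (p - 1) < c powr (p - 1)"
        using a p by (intro powr_less_mono2) auto
      then show "\<exists>d. (\<phi> has_real_derivative d) (at t) \<and> d < 0"
        using der[of t] \<open>a < t\<close> a p by (intro exI[of _ "\<phi>' t"] conjI) (auto simp: \<phi>'_def)
    qed (use cont a in auto)
  next
    case False
    then have "c < a" using a by simp
    show ?thesis
    proof (rule DERIV_pos_imp_increasing_open[OF \<open>c < a\<close>])
      fix t assume "c < t" "t < a"
      then have "c powr (p - 1) < t powr (p - 1)"
        using c p by (intro powr_less_mono2) auto
      then show "\<exists>d. (\<phi> has_real_derivative d) (at t) \<and> d > 0"
        using der[of t] \<open>c < t\<close> c p by (intro exI[of _ "\<phi>' t"] conjI) (auto simp: \<phi>'_def)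
    qed (use cont c in auto)
  qed
  then show ?thesis
    unfolding \<phi>_def right_diff_distrib by linarith
qed

lemma powr_tangent_le:
  fixes p a c :: real
  assumes "p > 1" "c > 0" "a \<ge> 0"
  shows "c powr p + p * c powr (p - 1) * (a - c) \<le> a powr p"
  using powr_tangent_less[OF assms] by (cases "a = c") (auto simp: less_imp_le)

lemma abs_powr_convex:
  fixes p a b t :: real
  assumes p: "p > 1" and t: "0 \<le> t" "t \<le> 1"
  shows "\<bar>(1 - t) * a + t * b\<bar> powr p \<le> (1 - t) * \<bar>a\<bar> powr p + t * \<bar>b\<bar> powr p"
proof -
  define c where "c = (1 - t) * \<bar>a\<bar> + t * \<bar>b\<bar>"
  have "\<bar>(1 - t) * a + t * b\<bar> \<le> c"
    unfolding c_def using t by (metis abs_mult abs_of_nonneg abs_triangle_ineq diff_ge_0_iff_ge)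
  then have "\<bar>(1 - t) * a + t * b\<bar> powr p \<le> c powr p"
    using p by (intro powr_mono2) auto
  also have "c powr p \<le> (1 - t) * \<bar>a\<bar> powr p + t * \<bar>b\<bar> powr p"
  proof (cases "c = 0")
    case True
    then show ?thesis using t by simp
  next
    case False
    then have c: "c > 0" using t by (simp add: c_def order.not_eq_order_implies_strict)
    let ?P = "p * c powr (p - 1)"
    have "c powr p = (1 - t) * (c powr p + ?P * (\<bar>a\<bar> - c)) + t * (c powr p + ?P * (\<bar>b\<bar> - c))"
      by (simp add: c_def algebra_simps)
    also have "\<dots> \<le> (1 - t) * \<bar>a\<bar> powr p + t * \<bar>b\<bar> powr p"
      using t powr_tangent_le[OF p c] by (intro add_mono mult_left_mono) auto
    finally show ?thesis .
  qed
  finally show ?thesis .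
qed

lemma abs_powr_midpoint_less:
  fixes p a b :: real
  assumes p: "p > 1" and ab: "a \<noteq> b"
  shows "\<bar>(a + b) / 2\<bar> powr p < (\<bar>a\<bar> powr p + \<bar>b\<bar> powr p) / 2"
proof (cases "\<bar>a\<bar> = \<bar>b\<bar>")
  case True
  then have "b = - a" "a \<noteq> 0" using ab by (auto simp: abs_eq_iff)
  then show ?thesis by simp
next
  case False
  define c where "c = (\<bar>a\<bar> + \<bar>b\<bar>) / 2"
  have c: "c > 0" using False by (auto simp: c_def)
  have "\<bar>(a + b) / 2\<bar> powr p \<le> c powr p"
    unfolding c_def using p by (intro powr_mono2) auto
  also have "\<dots> = ((c powr p + p * c powr (p - 1) * (\<bar>a\<bar> - c))
                    + (c powr p + p * c powr (p - 1) * (\<bar>b\<bar> - c))) / 2"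
    by (simp add: c_def algebra_simps)
  also have "\<dots> < (\<bar>a\<bar> powr p + \<bar>b\<bar> powr p) / 2"
  proof -
    have "\<bar>a\<bar> \<noteq> c \<or> \<bar>b\<bar> \<noteq> c" using False by (auto simp: c_def)
    then show ?thesis
      using powr_tangent_le[OF p c, of "\<bar>a\<bar>"] powr_tangent_le[OF p c, of "\<bar>b\<bar>"]
        powr_tangent_less[OF p c, of "\<bar>a\<bar>"] powr_tangent_less[OF p c, of "\<bar>b\<bar>"]
      by auto
  qed
  finally show ?thesis .
qed

section \<open>The \<open>p\<close>-th power of the \<open>\<ell>\<^sub>p\<close> norm\<close>

definition lp_sum :: "real \<Rightarrow> real ^ 'n \<Rightarrow> real" where
  "lp_sum p x = (\<Sum>i\<in>UNIV. \<bar>x $ i\<bar> powr p)"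

lemma lp_norm_eq_lp_sum_powr: "lp_norm p x = lp_sum p x powr (1 / p)"
  unfolding lp_norm_def lp_sum_def ..

lemma lp_sum_nonneg: "lp_sum p x \<ge> 0"
  unfolding lp_sum_def by (intro sum_nonneg) simp

lemma lp_norm_le_iff:
  assumes "p > 0"
  shows "lp_norm p x \<le> lp_norm p z \<longleftrightarrow> lp_sum p x \<le> lp_sum p z"
proof
  assume "lp_norm p x \<le> lp_norm p z"
  then show "lp_sum p x \<le> lp_sum p z"
    unfolding lp_norm_eq_lp_sum_powr using assms lp_sum_nonneg
    by (meson not_le powr_less_mono2 zero_less_divide_1_iff)
next
  assume "lp_sum p x \<le> lp_sum p z"
  then show "lp_norm p x \<le> lp_norm p z"
    unfolding lp_norm_eq_lp_sum_powr using assms lp_sum_nonneg by (intro powr_mono2) auto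
qed

lemma lp_sum_convex:
  assumes "p > 1" "0 \<le> t" "t \<le> 1"
  shows "lp_sum p ((1 - t) *\<^sub>R x + t *\<^sub>R z) \<le> (1 - t) * lp_sum p x + t * lp_sum p z"
  unfolding lp_sum_def sum_distrib_left sum.distrib[symmetric]
  by (intro sum_mono) (use abs_powr_convex[OF assms] in simp)

lemma lp_sum_midpoint_less:
  assumes p: "p > 1" and "x \<noteq> z"
  shows "lp_sum p (midpoint x z) < (lp_sum p x + lp_sum p z) / 2"
proof -
  obtain i where i: "x $ i \<noteq> z $ i" using \<open>x \<noteq> z\<close> by (metis vec_eq_iff)
  have "lp_sum p (midpoint x z) < (\<Sum>k\<in>UNIV. (\<bar>x $ k\<bar> powr p + \<bar>z $ k\<bar> powr p) / 2)"
    unfolding lp_sum_def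
  proof (rule sum_strict_mono_ex1)
    show "\<forall>k\<in>UNIV. \<bar>midpoint x z $ k\<bar> powr p \<le> (\<bar>x $ k\<bar> powr p + \<bar>z $ k\<bar> powr p) / 2"
      using abs_powr_convex[OF p, of "1/2"] by (auto simp: midpoint_def field_simps)
    show "\<exists>k\<in>UNIV. \<bar>midpoint x z $ k\<bar> powr p < (\<bar>x $ k\<bar> powr p + \<bar>z $ k\<bar> powr p) / 2"
      using abs_powr_midpoint_less[OF p i] by (auto simp: midpoint_def field_simps)
  qed simp
  also have "\<dots> = (lp_sum p x + lp_sum p z) / 2"
    by (simp add: lp_sum_def sum.distrib sum_divide_distrib[symmetric])
  finally show ?thesis .
qed

lemma lp_sum_minimizer_unique:
  assumes p: "p > 1" and "convex C" "x1 \<in> C" "x2 \<in> C"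
    and min1: "\<And>z. z \<in> C \<Longrightarrow> lp_sum p x1 \<le> lp_sum p z"
    and min2: "\<And>z. z \<in> C \<Longrightarrow> lp_sum p x2 \<le> lp_sum p z"
  shows "x1 = x2"
proof (rule ccontr)
  assume "x1 \<noteq> x2"
  have "midpoint x1 x2 \<in> C"
    using \<open>convex C\<close> \<open>x1 \<in> C\<close> \<open>x2 \<in> C\<close>
    by (meson closed_segment_subset midpoint_in_closed_segment subsetD)
  then show False
    using lp_sum_midpoint_less[OF p \<open>x1 \<noteq> x2\<close>] min1 min2 by fastforce
qed

lemma lp_sum_scaleR:
  assumes "p > 0"
  shows "lp_sum p (s *\<^sub>R x) = \<bar>s\<bar> powr p * lp_sum p x"
  unfolding lp_sum_def sum_distrib_left by (simp add: abs_mult powr_mult)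

lemma lp_sum_pos:
  assumes "x \<noteq> 0"
  shows "lp_sum p x > 0"
proof -
  obtain i where "x $ i \<noteq> 0" using assms by (metis vec_eq_iff zero_index)
  then have "0 < \<bar>x $ i\<bar> powr p" by simp
  also have "\<dots> \<le> lp_sum p x"
    unfolding lp_sum_def by (rule member_le_sum) auto
  finally show ?thesis .
qed

lemma continuous_on_lp_sum [continuous_intros]:
  assumes "p > 0" "continuous_on S g"
  shows "continuous_on S (\<lambda>u. lp_sum p (g u))"
  unfolding lp_sum_def using assms
  by (intro continuous_on_sum continuous_on_powr' continuous_intros) auto

lemma norm_le_lp_sum:
  fixes x :: "real ^ 'n"
  assumes p: "p > 0"
  shows "norm x \<le> real CARD('n) * lp_sum p x powr (1 / p)"
proof -
  have "\<bar>x $ i\<bar> \<le> lp_sum p x powr (1 / p)" for i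
  proof -
    have "\<bar>x $ i\<bar> powr p \<le> lp_sum p x"
      unfolding lp_sum_def by (rule member_le_sum) auto
    then have "(\<bar>x $ i\<bar> powr p) powr (1 / p) \<le> lp_sum p x powr (1 / p)"
      using p by (intro powr_mono2) auto
    then show ?thesis using p by (simp add: powr_powr)
  qed
  then have "(\<Sum>i\<in>UNIV. \<bar>x $ i\<bar>) \<le> (\<Sum>i\<in>(UNIV::'n set). lp_sum p x powr (1 / p))"
    by (intro sum_mono)
  then show ?thesis using norm_le_l1_cart[of x] by simp
qed

lemma lp_sum_add_axis:
  assumes "x $ j = 0"
  shows "lp_sum p (x + t *\<^sub>R axis j 1) = lp_sum p x + \<bar>t\<bar> powr p"
proof -
  have "lp_sum p (x + t *\<^sub>R axis j 1) = (\<Sum>i\<in>UNIV. \<bar>x $ i\<bar> powr p + (if i = j then \<bar>t\<bar> powr p else 0))"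
    unfolding lp_sum_def using assms by (intro sum.cong) (auto simp: axis_def)
  then show ?thesis by (simp add: sum.distrib lp_sum_def)
qed

lemma lp_sum_scaled_axis_step_less:
  assumes p: "p > 1" and xj: "x $ j = 0" and \<theta>: "0 < \<theta>" "\<theta> \<le> 1"
    and small: "\<bar>t\<bar> powr p < \<theta> * lp_sum p x"
  shows "lp_sum p ((1 - \<theta>) *\<^sub>R (x + t *\<^sub>R axis j 1)) < lp_sum p x"
proof -
  have "lp_sum p ((1 - \<theta>) *\<^sub>R (x + t *\<^sub>R axis j 1)) = (1 - \<theta>) powr p * (lp_sum p x + \<bar>t\<bar> powr p)"
    using p \<theta> by (simp add: lp_sum_scaleR lp_sum_add_axis[OF xj])
  also have "\<dots> \<le> (1 - \<theta>) * (lp_sum p x + \<bar>t\<bar> powr p)"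
  proof (rule mult_right_mono)
    show "(1 - \<theta>) powr p \<le> 1 - \<theta>"
      using \<theta> p by (cases "\<theta> = 1") (auto intro: powr_le_one_le)
  qed (simp add: add_nonneg_nonneg lp_sum_nonneg)
  also have "\<dots> = lp_sum p x - \<theta> * lp_sum p x + (1 - \<theta>) * \<bar>t\<bar> powr p"
    by (simp add: algebra_simps)
  also have "(1 - \<theta>) * \<bar>t\<bar> powr p \<le> \<bar>t\<bar> powr p"
    using \<theta> by (intro mult_left_le_one_le) auto
  finally show ?thesis
    using small by linarith
qed

section \<open>The optimization problem\<close>

lemma norm_residual_convex:
  fixes A :: "real ^ 'n ^ 'm"
  assumes "0 \<le> t" "t \<le> 1"
  shows "norm (A *v ((1 - t) *\<^sub>R x + t *\<^sub>R z) - y)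
           \<le> (1 - t) * norm (A *v x - y) + t * norm (A *v z - y)"
proof -
  have "A *v ((1 - t) *\<^sub>R x + t *\<^sub>R z) - y = (1 - t) *\<^sub>R (A *v x - y) + t *\<^sub>R (A *v z - y)"
    by (simp add: matrix_vector_right_distrib matrix_vector_mult_scaleR algebra_simps)
  then show ?thesis
    using assms norm_triangle_ineq[of "(1 - t) *\<^sub>R (A *v x - y)" "t *\<^sub>R (A *v z - y)"] by simp
qed

lemma convex_residual_le:
  fixes A :: "real ^ 'n ^ 'm"
  shows "convex {x. norm (A *v x - y) \<le> eps}"
proof -
  have "{x. norm (A *v x - y) \<le> eps} = (\<lambda>x. A *v x) -` cball y eps"
    by (auto simp: dist_norm norm_minus_commute)
  then show ?thesis
    using convex_linear_vimage[OF matrix_vector_mul_linear convex_cball] by simp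
qed

lemma norm_residual_shrink:
  fixes A :: "real ^ 'n ^ 'm"
  assumes res: "norm (A *v x - y) \<le> eps - d" and d: "0 \<le> d" "d \<le> norm y"
  shows "norm (A *v ((1 - d / norm y) *\<^sub>R x) - y) \<le> eps"
proof -
  define \<theta> where "\<theta> = d / norm y"
  have \<theta>: "0 \<le> \<theta>" "\<theta> \<le> 1" "\<theta> * norm y = d"
    by (cases "norm y = 0") (use d in \<open>auto simp: \<theta>_def divide_le_eq_1\<close>)
  have "norm (A *v ((1 - \<theta>) *\<^sub>R x) - y) \<le> (1 - \<theta>) * norm (A *v x - y) + \<theta> * norm y"
    using norm_residual_convex[of \<theta> A x 0 y] \<theta> by simp
  also have "(1 - \<theta>) * norm (A *v x - y) \<le> norm (A *v x - y)"
    using \<theta> by (intro mult_left_le_one_le) auto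
  finally show ?thesis
    using res \<theta>(3) by (simp add: \<theta>_def)
qed

lemma le_sub_half_div_if_power2_le:
  fixes d e s :: real
  assumes d: "d\<^sup>2 \<le> e\<^sup>2 - s" and e: "e > 0"
  shows "d \<le> e - s / (2 * e)"
proof -
  define q where "q = s / (2 * e)"
  have q: "2 * e * q = s"
    using e by (simp add: q_def)
  then have "e * (2 * q) \<le> e * e"
    using d zero_le_power2[of d] unfolding power2_eq_square by linarith
  then have "2 * q \<le> e"
    using mult_le_cancel_left_pos[OF e] by simp
  then have "0 \<le> e - q"
    using e by linarith
  moreover have "d\<^sup>2 \<le> (e - q)\<^sup>2"
    using d q power2_diff[of e q] zero_le_power2[of q] by linarith
  ultimately show ?thesis
    unfolding q_def using power2_le_imp_le by blast
qed

lemma norm_residual_axis_step: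
  fixes A :: "real ^ 'n ^ 'm" and x :: "real ^ 'n" and y :: "real ^ 'm" and j :: 'n
  defines "c \<equiv> column j A \<bullet> (y - A *v x)"
  assumes eps: "eps > 0" and res: "norm (y - A *v x) = eps"
    and \<tau>: "0 \<le> \<tau>" "\<tau> * (norm (column j A))\<^sup>2 \<le> \<bar>c\<bar>"
  shows "norm (A *v (x + (sgn c * \<tau>) *\<^sub>R axis j 1) - y) \<le> eps - \<bar>c\<bar> * \<tau> / (2 * eps)"
proof -
  define a where "a = column j A"
  define r where "r = y - A *v x"
  define s where "s = sgn c * \<tau>"
  define d where "d = norm (A *v (x + s *\<^sub>R axis j 1) - y)"
  have "d = norm (s *\<^sub>R a - r)"
    unfolding d_def a_def r_def
    by (simp add: matrix_vector_right_distrib matrix_vector_mult_scaleR matrix_vector_mult_basis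
        diff_diff_eq2 add.commute)
  then have "d\<^sup>2 = (s *\<^sub>R a - r) \<bullet> (s *\<^sub>R a - r)"
    by (simp add: power2_norm_eq_inner)
  also have "\<dots> = s\<^sup>2 * (a \<bullet> a) - 2 * (s * (a \<bullet> r)) + r \<bullet> r"
    by (simp add: inner_diff_left inner_diff_right inner_commute[of r a] power2_eq_square
        algebra_simps)
  also have "\<dots> \<le> \<tau> * (\<tau> * (norm a)\<^sup>2) - 2 * (\<tau> * \<bar>c\<bar>) + eps\<^sup>2"
  proof -
    have "s\<^sup>2 \<le> \<tau>\<^sup>2" by (simp add: s_def sgn_if power_mult_distrib)
    then have "s\<^sup>2 * (a \<bullet> a) \<le> \<tau> * (\<tau> * (norm a)\<^sup>2)"
      by (simp add: mult_right_mono power2_norm_eq_inner[symmetric] power2_eq_square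
          flip: mult.assoc)
    moreover have "s * (a \<bullet> r) = \<tau> * \<bar>c\<bar>"
      by (simp add: s_def a_def r_def c_def abs_sgn)
    moreover have "r \<bullet> r = eps\<^sup>2"
      using res by (simp add: r_def power2_norm_eq_inner[symmetric])
    ultimately show ?thesis by linarith
  qed
  also have "\<dots> \<le> eps\<^sup>2 - \<tau> * \<bar>c\<bar>"
    using mult_left_mono[OF \<tau>(2) \<tau>(1)] by (simp add: a_def)
  finally have "d\<^sup>2 \<le> eps\<^sup>2 - \<tau> * \<bar>c\<bar>" .
  then have "d \<le> eps - \<tau> * \<bar>c\<bar> / (2 * eps)"
    using eps by (rule le_sub_half_div_if_power2_le)
  then show ?thesis
    by (simp add: d_def s_def mult.commute)
qed

lemma lp_opt_iff:
  assumes "p > 0"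
  shows "lp_opt p eps A y x \<longleftrightarrow>
           norm (A *v x - y) \<le> eps \<and> (\<forall>z. norm (A *v z - y) \<le> eps \<longrightarrow> lp_sum p x \<le> lp_sum p z)"
  unfolding lp_opt_def by (simp add: lp_norm_le_iff[OF assms])

lemma lp_opt_unique:
  assumes "p > 1" "lp_opt p eps A y x1" "lp_opt p eps A y x2"
  shows "x1 = x2"
  using assms lp_sum_minimizer_unique[OF \<open>p > 1\<close> convex_residual_le, of x1 A y eps x2]
  by (auto simp: lp_opt_iff)

lemma lp_opt_exists:
  fixes A :: "real ^ 'n ^ 'm"
  assumes p: "p > 0" and x0: "norm (A *v x0 - y) \<le> eps"
  shows "\<exists>x. lp_opt p eps A y x"
proof -
  define C where "C = {x. norm (A *v x - y) \<le> eps \<and> lp_sum p x \<le> lp_sum p x0}"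
  have "closed C"
    unfolding C_def using p by (intro closed_Collect_conj closed_Collect_le continuous_intros)
  moreover have "bounded C"
  proof -
    have "norm x \<le> real CARD('n) * lp_sum p x0 powr (1 / p)" if "x \<in> C" for x
    proof -
      have "lp_sum p x powr (1 / p) \<le> lp_sum p x0 powr (1 / p)"
        using that p lp_sum_nonneg[of p x] by (intro powr_mono2) (auto simp: C_def)
      then show ?thesis
        using norm_le_lp_sum[OF p, of x] by (meson mult_left_mono of_nat_0_le_iff order_trans)
    qed
    then show ?thesis by (auto simp: bounded_iff)
  qed
  moreover have "x0 \<in> C" using x0 by (simp add: C_def)
  ultimately obtain x where x: "x \<in> C" "\<And>z. z \<in> C \<Longrightarrow> lp_sum p x \<le> lp_sum p z"
    using continuous_attains_inf[of C "lp_sum p"] compact_eq_bounded_closed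
      continuous_on_lp_sum[OF p continuous_on_id] by blast
  have "lp_sum p x \<le> lp_sum p z" if "norm (A *v z - y) \<le> eps" for z
    using x that by (cases "lp_sum p z \<le> lp_sum p x0") (auto simp: C_def)
  then have "lp_opt p eps A y x"
    using x(1) by (simp add: lp_opt_iff[OF p] C_def)
  then show ?thesis ..
qed

lemma lp_opt_residual_eq:
  fixes A :: "real ^ 'n ^ 'm"
  assumes p: "p > 1" and y: "norm y > eps" and x: "lp_opt p eps A y x"
  shows "norm (A *v x - y) = eps"
proof (rule ccontr)
  define d where "d = eps - norm (A *v x - y)"
  assume "norm (A *v x - y) \<noteq> eps"
  moreover have "norm (A *v x - y) \<le> eps"
    using x p by (simp add: lp_opt_iff)
  ultimately have d: "0 < d" "d < norm y"
    using y norm_ge_zero[of "A *v x - y"] unfolding d_def by linarith+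
  define \<theta> where "\<theta> = d / norm y"
  have \<theta>: "0 < \<theta>" "\<theta> < 1"
    using d by (auto simp: \<theta>_def divide_less_eq_1 intro!: divide_pos_pos)
  have "norm (A *v ((1 - \<theta>) *\<^sub>R x) - y) \<le> eps"
    unfolding \<theta>_def by (rule norm_residual_shrink) (use d in \<open>auto simp: d_def\<close>)
  then have "lp_sum p x \<le> lp_sum p ((1 - \<theta>) *\<^sub>R x)"
    using x p by (simp add: lp_opt_iff)
  also have "\<dots> = (1 - \<theta>) powr p * lp_sum p x"
    using p \<theta> by (simp add: lp_sum_scaleR)
  also have "\<dots> < lp_sum p x"
  proof -
    have "x \<noteq> 0" using x y p by (auto simp: lp_opt_iff)
    then show ?thesis
      using lp_sum_pos[of x p] powr01_less_one[of "1 - \<theta>" p] \<theta> p by simp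
  qed
  finally show False by simp
qed

lemma eventually_at_right_0_linear_powr_less:
  fixes M :: real
  assumes "a > 0" "b > 0" "q > 0"
  shows "\<forall>\<^sub>F \<tau> in at_right 0. \<tau> * M < a \<and> \<tau> powr q < b"
proof (rule eventually_conj)
  have "((\<lambda>\<tau>. \<tau> * M) \<longlongrightarrow> 0) (at_right 0)"
    by (intro tendsto_mult_left_zero tendsto_ident_at)
  then show "\<forall>\<^sub>F \<tau> in at_right 0. \<tau> * M < a"
    using assms(1) by (rule order_tendstoD(2))
  have "((\<lambda>\<tau>. \<tau> powr q) \<longlongrightarrow> 0) (at_right 0)"
    using assms(3) eventually_at_right_less[of "0::real"]
    by (intro tendsto_zero_powrI tendsto_ident_at tendsto_const) (auto elim: eventually_mono)
  then show "\<forall>\<^sub>F \<tau> in at_right 0. \<tau> powr q < b"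
    using assms(2) by (rule order_tendstoD(2))
qed

lemma lp_opt_column_orthogonal:
  fixes A :: "real ^ 'n ^ 'm"
  assumes p: "p > 1" and y: "norm y > eps" and x: "lp_opt p eps A y x" and xj: "x $ j = 0"
  shows "column j A \<bullet> (y - A *v x) = 0"
proof (rule ccontr)
  define c where "c = column j A \<bullet> (y - A *v x)"
  define F where "F = lp_sum p x"
  define \<kappa> where "\<kappa> = \<bar>c\<bar> / (2 * eps)"
  assume "column j A \<bullet> (y - A *v x) \<noteq> 0"
  then have c: "c \<noteq> 0" by (simp add: c_def)
  have res: "norm (y - A *v x) = eps"
    using lp_opt_residual_eq[OF p y x] by (simp add: norm_minus_commute)
  have eps: "eps > 0"
    using res c norm_ge_zero[of "y - A *v x"] by (fastforce simp: c_def)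
  have "x \<noteq> 0" using res y by auto
  then have F: "F > 0" by (simp add: F_def lp_sum_pos)
  have "0 < \<kappa> * F / norm y"
    using c eps F y by (intro divide_pos_pos mult_pos_pos) (auto simp: \<kappa>_def)
  then have small: "\<forall>\<^sub>F \<tau> in at_right 0.
      \<tau> * (norm (column j A))\<^sup>2 < \<bar>c\<bar> \<and> \<tau> powr (p - 1) < \<kappa> * F / norm y"
    using c p by (intro eventually_at_right_0_linear_powr_less) auto
  obtain \<tau> where \<tau>: "\<tau> > 0" "\<tau> * (norm (column j A))\<^sup>2 < \<bar>c\<bar>"
    "\<tau> powr (p - 1) < \<kappa> * F / norm y"
    using eventually_happens'[OF trivial_limit_at_right_real
        eventually_conj[OF eventually_at_right_less small]] by blast
  define \<theta> where "\<theta> = \<kappa> * \<tau> / norm y"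
  define x' where "x' = x + (sgn c * \<tau>) *\<^sub>R axis j 1"
  have step: "norm (A *v x' - y) \<le> eps - \<kappa> * \<tau>"
    using norm_residual_axis_step[OF eps res less_imp_le[OF \<tau>(1)]] \<tau>(2)
    by (simp add: x'_def c_def \<kappa>_def mult.commute)
  then have "\<kappa> * \<tau> \<le> eps" using norm_ge_zero[of "A *v x' - y"] by linarith
  then have "norm (A *v ((1 - \<theta>) *\<^sub>R x') - y) \<le> eps"
    unfolding \<theta>_def using norm_residual_shrink[OF step] \<tau>(1) c eps y
    by (simp add: \<kappa>_def)
  then have "F \<le> lp_sum p ((1 - \<theta>) *\<^sub>R x')"
    using x p by (simp add: lp_opt_iff F_def)
  moreover have "\<bar>sgn c * \<tau>\<bar> powr p < \<theta> * F"
  proof -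
    have "\<bar>sgn c * \<tau>\<bar> powr p = \<tau> * \<tau> powr (p - 1)"
      using c \<tau>(1) by (simp add: abs_mult powr_diff)
    also have "\<dots> < \<tau> * (\<kappa> * F / norm y)"
      using \<tau> by (intro mult_strict_left_mono)
    finally show ?thesis by (simp add: \<theta>_def mult_ac)
  qed
  moreover have "0 < \<theta>" "\<theta> \<le> 1"
    using \<open>\<kappa> * \<tau> \<le> eps\<close> \<open>0 < \<kappa> * F / norm y\<close> F y \<tau>(1)
    by (auto simp: \<theta>_def zero_less_mult_iff zero_less_divide_iff divide_le_eq_1)
  ultimately show False
    using lp_sum_scaled_axis_step_less[OF p xj] by (fastforce simp: x'_def F_def)
qed

lemma vector_matrix_mult_add_right:
  fixes A B :: "real ^ 'n ^ 'm"
  shows "v v* (A + B) = v v* A + v v* B"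
  unfolding vector_matrix_mult_def by (simp add: vec_eq_iff sum.distrib algebra_simps)

lemma vector_matrix_mult_axis: "v v* (axis i w :: real ^ 'n ^ 'm) = v $ i *\<^sub>R w"
  unfolding vector_matrix_mult_def axis_def
  by (simp add: vec_eq_iff if_distrib[of "\<lambda>t. t $ _"] if_distrib[of "\<lambda>t. _ * t"] cong: if_cong)

lemma continuous_on_matrix_vector_mult [continuous_intros]:
  fixes f :: "'a::topological_space \<Rightarrow> real ^ 'n ^ 'm"
  assumes "continuous_on S f" "continuous_on S g"
  shows "continuous_on S (\<lambda>u. f u *v g u)"
  unfolding matrix_vector_mult_def by (intro continuous_intros assms)

lemma continuous_on_vector_matrix_mult [continuous_intros]:
  fixes f :: "'a::topological_space \<Rightarrow> real ^ 'n ^ 'm"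
  assumes "continuous_on S f" "continuous_on S g"
  shows "continuous_on S (\<lambda>u. g u v* f u)"
  unfolding vector_matrix_mult_def by (intro continuous_intros assms)

lemma continuous_on_column [continuous_intros]:
  fixes f :: "'a::topological_space \<Rightarrow> real ^ 'n ^ 'm"
  assumes "continuous_on S f"
  shows "continuous_on S (\<lambda>u. column j (f u))"
  unfolding column_def by (intro continuous_intros assms)

lemma continuous_on_axis [continuous_intros]:
  assumes "continuous_on S f"
  shows "continuous_on S (\<lambda>u. axis i (f u) :: 'b::real_normed_vector ^ 'n)"
  unfolding axis_def
proof (intro continuous_on_vec_lambda)
  fix k
  show "continuous_on S (\<lambda>u. if k = i then f u else 0)"
    using assms by (cases "k = i") auto
qed

lemma continuous_on_transpose [continuous_intros]:
  fixes f :: "'a::topological_space \<Rightarrow> real ^ 'n ^ 'm"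
  assumes "continuous_on S f"
  shows "continuous_on S (\<lambda>u. transpose (f u))"
  unfolding transpose_def by (intro continuous_intros assms)

section \<open>The problem restricted to a coordinate hyperplane\<close>

lemma lp_sum_min_on_strictly_feasible:
  fixes A :: "real ^ 'n ^ 'm"
  assumes p: "p > 1" and V: "convex V" and w: "w \<in> V" "norm (A *v w - y) < eps"
    and min: "\<And>z. z \<in> V \<Longrightarrow> norm (A *v z - y) < eps \<Longrightarrow> lp_sum p x \<le> lp_sum p z"
    and z: "z \<in> V" "norm (A *v z - y) \<le> eps"
  shows "lp_sum p x \<le> lp_sum p z"
proof (rule tendsto_lowerbound)
  have "((\<lambda>t. (1 - t) * lp_sum p z + t * lp_sum p w) \<longlongrightarrow> (1 - 0) * lp_sum p z + 0 * lp_sum p w)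
      (at_right 0)"
    by (intro tendsto_intros)
  then show "((\<lambda>t. (1 - t) * lp_sum p z + t * lp_sum p w) \<longlongrightarrow> lp_sum p z) (at_right 0)"
    by simp
  have "\<forall>\<^sub>F t in at_right 0. t < (1::real)"
    using order_tendstoD(2)[OF tendsto_ident_at, of "0::real" 1 "{0<..}"] by simp
  then show "\<forall>\<^sub>F t in at_right 0. lp_sum p x \<le> (1 - t) * lp_sum p z + t * lp_sum p w"
    using eventually_at_right_less
  proof eventually_elim
    case (elim t)
    have "(1 - t) *\<^sub>R z + t *\<^sub>R w \<in> V"
      using elim V w z by (intro convexD) auto
    moreover have "norm (A *v ((1 - t) *\<^sub>R z + t *\<^sub>R w) - y) < eps"
    proof -
      have "(1 - t) * norm (A *v z - y) + t * norm (A *v w - y) < (1 - t) * eps + t * eps"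
        using elim w z by (intro add_le_less_mono mult_left_mono mult_strict_left_mono) auto
      then show ?thesis
        using norm_residual_convex[of t A z w y] elim by (simp add: algebra_simps)
    qed
    ultimately have "lp_sum p x \<le> lp_sum p ((1 - t) *\<^sub>R z + t *\<^sub>R w)"
      by (rule min)
    also have "\<dots> \<le> (1 - t) * lp_sum p z + t * lp_sum p w"
      using elim by (intro lp_sum_convex p) auto
    finally show ?case .
  qed
qed simp

lemma fitted_value_unique:
  fixes A :: "real ^ 'n ^ 'm"
  assumes p: "p > 1" and V: "convex V"
    and x1: "x1 \<in> V" "norm (A *v x1 - y) = eps"
      "\<And>z. z \<in> V \<Longrightarrow> norm (A *v z - y) < eps \<Longrightarrow> lp_sum p x1 \<le> lp_sum p z"
    and x2: "x2 \<in> V" "norm (A *v x2 - y) = eps"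
      "\<And>z. z \<in> V \<Longrightarrow> norm (A *v z - y) < eps \<Longrightarrow> lp_sum p x2 \<le> lp_sum p z"
  shows "A *v x1 = A *v x2"
proof (cases "\<exists>w\<in>V. norm (A *v w - y) < eps")
  case True
  then obtain w where w: "w \<in> V" "norm (A *v w - y) < eps" by blast
  let ?C = "V \<inter> {z. norm (A *v z - y) \<le> eps}"
  have "convex ?C"
    using V convex_residual_le by (rule convex_Int)
  moreover have "x1 \<in> ?C" "x2 \<in> ?C" using x1 x2 by auto
  moreover have "lp_sum p x1 \<le> lp_sum p z" "lp_sum p x2 \<le> lp_sum p z" if "z \<in> ?C" for z
    using that lp_sum_min_on_strictly_feasible[OF p V w x1(3)]
      lp_sum_min_on_strictly_feasible[OF p V w x2(3)] by auto
  ultimately have "x1 = x2"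
    by (rule lp_sum_minimizer_unique[OF p])
  then show ?thesis by simp
next
  case False
  define r1 where "r1 = A *v x1 - y"
  define r2 where "r2 = A *v x2 - y"
  have "midpoint x1 x2 \<in> V"
    using V x1(1) x2(1) by (meson closed_segment_subset midpoint_in_closed_segment subsetD)
  then have "eps \<le> norm (A *v midpoint x1 x2 - y)"
    using False by (simp add: not_less)
  also have "A *v midpoint x1 x2 - y = (1/2) *\<^sub>R (r1 + r2)"
  proof -
    have "A *v midpoint x1 x2 = midpoint (A *v x1) (A *v x2)"
      by (simp add: midpoint_linear_image matrix_vector_mul_linear)
    then show ?thesis
      by (simp add: r1_def r2_def midpoint_def scaleR_right_diff_distrib scaleR_right_distrib
          diff_add_eq add_diff_eq flip: scaleR_left_distrib)
  qed
  finally have "norm r1 + norm r2 \<le> norm (r1 + r2)"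
    using x1(2) x2(2) by (simp add: r1_def r2_def)
  then have "norm (r1 + r2) = norm r1 + norm r2"
    using norm_triangle_ineq[of r1 r2] by linarith
  then have "norm r1 *\<^sub>R r2 = norm r2 *\<^sub>R r1"
    using norm_triangle_eq[of r1 r2] by blast
  moreover have "norm r1 = eps" "norm r2 = eps"
    using x1(2) x2(2) by (simp_all add: r1_def r2_def)
  ultimately have "r1 = r2"
    by (cases "eps = 0") auto
  then show ?thesis by (simp add: r1_def r2_def)
qed

text \<open>Only strictly feasible competitors are compared, which keeps the condition closed
  in \<open>(x, A, y)\<close>.\<close>

definition restricted_opt ::
    "real \<Rightarrow> real \<Rightarrow> 'n \<Rightarrow> real ^ 'n ^ 'm \<Rightarrow> real ^ 'm \<Rightarrow> real ^ 'n \<Rightarrow> bool" where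
  "restricted_opt p eps j A y x \<longleftrightarrow> x $ j = 0 \<and> norm (A *v x - y) = eps \<and>
     (\<forall>z. z $ j = 0 \<longrightarrow> norm (A *v z - y) < eps \<longrightarrow> lp_sum p x \<le> lp_sum p z)"

lemma restricted_opt_add_column:
  "restricted_opt p eps j (A + transpose (axis j v)) y x \<longleftrightarrow> restricted_opt p eps j A y x"
  by (auto simp: restricted_opt_def matrix_vector_mult_add_rdistrib vector_matrix_mult_axis)

lemma restricted_opt_fitted_value_unique:
  fixes A :: "real ^ 'n ^ 'm"
  assumes "p > 1" "restricted_opt p eps j A y x1" "restricted_opt p eps j A y x2"
  shows "A *v x1 = A *v x2"
proof (rule fitted_value_unique[OF \<open>p > 1\<close>, where V = "{x. x $ j = 0}" and y = y and eps = eps])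
  show "convex {x :: real ^ 'n. x $ j = 0}"
    using convex_hyperplane[of "axis j (1::real)" 0] by (simp add: inner_axis' inner_real_def)
qed (use assms in \<open>auto simp: restricted_opt_def\<close>)

section \<open>Null sets from negligible translated sections\<close>

lemma nn_integral_lborel_translate:
  fixes c :: "'a::euclidean_space"
  assumes "g \<in> borel_measurable borel"
  shows "(\<integral>\<^sup>+ u. g (u + c) \<partial>lborel) = (\<integral>\<^sup>+ u. g u \<partial>lborel)"
proof -
  have "(\<integral>\<^sup>+ u. g u \<partial>lborel) = (\<integral>\<^sup>+ u. g u \<partial>distr lborel borel ((+) c))"
    by (simp add: lborel_distr_plus)
  also have "\<dots> = (\<integral>\<^sup>+ u. g (c + u) \<partial>lborel)"
    using assms by (intro nn_integral_distr) auto
  finally show ?thesis by (simp add: add.commute)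
qed

text \<open>Fubini for \<open>(w, u) \<mapsto> 1\<^sub>S(u + L w)\<close>: integrating over \<open>w\<close> first gives \<open>0\<close>, while
  integrating over \<open>u\<close> first gives \<open>\<lambda>(S)\<close> for every \<open>w\<close>, hence \<open>\<lambda>(S) \<cdot> \<infinity> = 0\<close>.\<close>

lemma null_sets_lborel_if_translated_sections_negligible:
  fixes S :: "'a::euclidean_space set" and L :: "'b::euclidean_space \<Rightarrow> 'a"
  assumes S: "S \<in> sets borel" and L: "L \<in> borel_measurable borel"
    and sections: "\<And>u. negligible {w. u + L w \<in> S}"
  shows "S \<in> null_sets lborel"
proof -
  define f where "f w u = (indicator S (u + L w) :: ennreal)" for w u
  have f_meas: "case_prod f \<in> borel_measurable (lborel \<Otimes>\<^sub>M lborel)"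
    unfolding f_def using S L by measurable
  have "(\<integral>\<^sup>+ w. f w u \<partial>lborel) = 0" for u
  proof -
    have "{w. u + L w \<in> S} \<in> sets borel"
      using S L by measurable
    then have N: "{w. u + L w \<in> S} \<in> null_sets lborel"
      using sections[of u] by (simp add: negligible_iff_null_sets null_sets_completion_iff)
    have "(\<lambda>w. f w u) = indicator {w. u + L w \<in> S}"
      by (auto simp: f_def indicator_def)
    then show ?thesis
      by (simp add: nn_integral_indicator[OF null_setsD2[OF N]] null_setsD1[OF N])
  qed
  then have "0 = (\<integral>\<^sup>+ u. (\<integral>\<^sup>+ w. f w u \<partial>lborel) \<partial>lborel)"
    by simp
  also have "\<dots> = (\<integral>\<^sup>+ w. (\<integral>\<^sup>+ u. f w u \<partial>lborel) \<partial>lborel)"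
    using lborel_pair.Fubini'[OF f_meas] by simp
  also have "\<dots> = (\<integral>\<^sup>+ (w::'b). emeasure lborel S \<partial>lborel)"
    unfolding f_def using S
    by (simp add: nn_integral_lborel_translate nn_integral_indicator borel_measurable_indicator)
  also have "\<dots> = emeasure lborel S * \<infinity>"
    by simp
  finally show ?thesis
    using S by (simp add: null_sets_def)
qed

lemma negligible_linear_image_hyperplane:
  fixes f :: "'a::euclidean_space \<Rightarrow> 'b::euclidean_space"
  assumes f: "linear f" and dim: "DIM('a) \<le> DIM('b)" and a: "a \<noteq> 0"
  shows "negligible (f ` {v. a \<bullet> v = b})"
proof -
  define v0 where "v0 = (b / (a \<bullet> a)) *\<^sub>R a"
  have "{v. a \<bullet> v = b} = (+) v0 ` {v. a \<bullet> v = 0}"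
  proof -
    have v0: "a \<bullet> v0 = b" using a by (simp add: v0_def)
    show ?thesis
    proof (intro set_eqI iffI)
      fix v assume "v \<in> {v. a \<bullet> v = b}"
      then show "v \<in> (+) v0 ` {v. a \<bullet> v = 0}"
        using v0 by (intro image_eqI[of _ _ "v - v0"]) (auto simp: inner_diff_right)
    qed (use v0 in \<open>auto simp: inner_add_right\<close>)
  qed
  then have "f ` {v. a \<bullet> v = b} = (+) (f v0) ` (f ` {v. a \<bullet> v = 0})"
    using linear_add[OF f] by (simp add: image_image)
  moreover have "dim (f ` {v. a \<bullet> v = 0}) < DIM('b)"
  proof -
    have "dim (f ` {v. a \<bullet> v = 0}) \<le> dim {v. a \<bullet> v = 0}"
      by (rule dim_image_le[OF f])
    also have "\<dots> = DIM('a) - 1"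
      using a by (rule dim_hyperplane)
    finally show ?thesis using dim DIM_positive[where 'a='a] by linarith
  qed
  ultimately show ?thesis
    by (simp add: negligible_translation negligible_lowdim)
qed

section \<open>The exceptional sets\<close>

text \<open>Bounding the witness by \<open>K\<close> makes these sets closed, being projections along a
  compact ball; their union over \<open>K\<close> is the whole exceptional set.\<close>

definition rank_deficient_pairs :: "'m \<Rightarrow> nat \<Rightarrow> ((real ^ 'n ^ 'm) \<times> (real ^ 'm)) set" where
  "rank_deficient_pairs i K = {(A, y). \<exists>v. norm v \<le> real K \<and> v $ i = 1 \<and> v v* A = 0}"

definition vanishing_coordinate_pairs ::
    "real \<Rightarrow> real \<Rightarrow> 'n \<Rightarrow> nat \<Rightarrow> ((real ^ 'n ^ 'm) \<times> (real ^ 'm)) set" where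
  "vanishing_coordinate_pairs p eps j K =
     {(A, y). \<exists>x. norm x \<le> real K \<and> restricted_opt p eps j A y x \<and> column j A \<bullet> (y - A *v x) = 0}"

lemma closed_rank_deficient_pairs:
  "closed (rank_deficient_pairs i K :: ((real ^ 'n ^ 'm) \<times> (real ^ 'm)) set)"
proof -
  define C :: "((real ^ 'm) \<times> (real ^ 'n ^ 'm) \<times> (real ^ 'm)) set"
    where "C = {w. fst w $ i = 1 \<and> fst w v* fst (snd w) = 0}"
  have "closed C"
    unfolding C_def by (intro closed_Collect_conj closed_Collect_eq continuous_intros)
  moreover have "rank_deficient_pairs i K = {q. \<exists>v. v \<in> cball 0 (real K) \<and> (v, q) \<in> C}"
    by (auto simp: rank_deficient_pairs_def C_def)
  ultimately show ?thesis
    using closed_compact_projection[OF compact_cball, of C 0 "real K"] by simp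
qed

lemma closed_vanishing_coordinate_pairs:
  assumes "p > 0"
  shows "closed (vanishing_coordinate_pairs p eps j K :: ((real ^ 'n ^ 'm) \<times> (real ^ 'm)) set)"
proof -
  define C :: "((real ^ 'n) \<times> (real ^ 'n ^ 'm) \<times> (real ^ 'm)) set"
    where "C = {w. restricted_opt p eps j (fst (snd w)) (snd (snd w)) (fst w) \<and>
                   column j (fst (snd w)) \<bullet> (snd (snd w) - fst (snd w) *v fst w) = 0}"
  have "closed C"
    unfolding C_def restricted_opt_def using assms
    by (intro closed_Collect_conj closed_Collect_eq closed_Collect_all closed_Collect_imp
        closed_Collect_le open_Collect_const open_Collect_less continuous_intros) auto
  moreover have "vanishing_coordinate_pairs p eps j K = {q. \<exists>x. x \<in> cball 0 (real K) \<and> (x, q) \<in> C}"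
    by (auto simp: vanishing_coordinate_pairs_def C_def)
  ultimately show ?thesis
    using closed_compact_projection[OF compact_cball, of C 0 "real K"] by simp
qed

lemma negligible_rank_deficient_section:
  fixes A :: "real ^ 'n ^ 'm" and y :: "real ^ 'm"
  assumes "CARD('m) \<le> CARD('n)"
  shows "negligible {w. (A, y) + (axis i w, 0) \<in> rank_deficient_pairs i K}"
proof (rule negligible_subset)
  show "negligible ((\<lambda>v. - (transpose A *v v)) ` {v. axis i 1 \<bullet> v = 1})"
    using assms
    by (intro negligible_linear_image_hyperplane linear_compose_neg matrix_vector_mul_linear) auto
  show "{w. (A, y) + (axis i w, 0) \<in> rank_deficient_pairs i K}
      \<subseteq> (\<lambda>v. - (transpose A *v v)) ` {v. axis i 1 \<bullet> v = 1}"
  proof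
    fix w assume "w \<in> {w. (A, y) + (axis i w, 0) \<in> rank_deficient_pairs i K}"
    then obtain v where v: "v $ i = 1" "v v* (A + axis i w) = 0"
      by (auto simp: rank_deficient_pairs_def)
    then have "w = - (transpose A *v v)"
      by (simp add: vector_matrix_mult_add_right vector_matrix_mult_axis eq_neg_iff_add_eq_0 add.commute)
    then show "w \<in> (\<lambda>v. - (transpose A *v v)) ` {v. axis i 1 \<bullet> v = 1}"
      using v(1) by (auto simp: inner_axis')
  qed
qed

lemma negligible_vanishing_coordinate_section:
  fixes A :: "real ^ 'n ^ 'm" and y :: "real ^ 'm"
  assumes p: "p > 1" and eps: "eps > 0"
  shows "negligible {v. (A, y) + (transpose (axis j v), 0) \<in> vanishing_coordinate_pairs p eps j K}"
proof -
  have witness: "\<exists>x. restricted_opt p eps j A y x \<and> (column j A + v) \<bullet> (y - A *v x) = 0"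
    if v: "(A, y) + (transpose (axis j v), 0) \<in> vanishing_coordinate_pairs p eps j K" for v
  proof -
    obtain x where x: "restricted_opt p eps j (A + transpose (axis j v)) y x"
      "column j (A + transpose (axis j v)) \<bullet> (y - (A + transpose (axis j v)) *v x) = 0"
      using v by (auto simp: vanishing_coordinate_pairs_def)
    have "x $ j = 0" using x(1) by (simp add: restricted_opt_def)
    then have "(A + transpose (axis j v)) *v x = A *v x"
      by (simp add: matrix_vector_mult_add_rdistrib vector_matrix_mult_axis)
    moreover have "column j (A + transpose (axis j v)) = column j A + v"
      by (simp add: column_def vec_eq_iff transpose_def axis_def)
    ultimately show ?thesis
      using x restricted_opt_add_column by metis
  qed
  show ?thesis
  proof (cases "\<exists>x0. restricted_opt p eps j A y x0")
    case False
    then have "{v. (A, y) + (transpose (axis j v), 0) \<in> vanishing_coordinate_pairs p eps j K} = {}"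
      using witness by blast
    then show ?thesis by simp
  next
    case True
    then obtain x0 where x0: "restricted_opt p eps j A y x0" ..
    define r0 where "r0 = y - A *v x0"
    have "r0 \<noteq> 0"
      using x0 eps by (auto simp: restricted_opt_def r0_def)
    then have "negligible {v. r0 \<bullet> v = - (column j A \<bullet> r0)}"
      by (intro negligible_hyperplane) simp
    moreover have "{v. (A, y) + (transpose (axis j v), 0) \<in> vanishing_coordinate_pairs p eps j K}
        \<subseteq> {v. r0 \<bullet> v = - (column j A \<bullet> r0)}"
    proof
      fix v assume "v \<in> {v. (A, y) + (transpose (axis j v), 0) \<in> vanishing_coordinate_pairs p eps j K}"
      then obtain x where x: "restricted_opt p eps j A y x" "(column j A + v) \<bullet> (y - A *v x) = 0"
        using witness by blast
      then have "(column j A + v) \<bullet> r0 = 0"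
        using restricted_opt_fitted_value_unique[OF p x(1) x0] by (simp add: r0_def)
      then show "v \<in> {v. r0 \<bullet> v = - (column j A \<bullet> r0)}"
        by (simp add: inner_add_left inner_add_right inner_commute eq_neg_iff_add_eq_0 add.commute)
    qed
    ultimately show ?thesis by (rule negligible_subset)
  qed
qed

lemma null_sets_rank_deficient_pairs:
  assumes "CARD('m) \<le> CARD('n)"
  shows "(rank_deficient_pairs i K :: ((real ^ 'n ^ 'm) \<times> (real ^ 'm)) set) \<in> null_sets lborel"
proof (rule null_sets_lborel_if_translated_sections_negligible[where L = "\<lambda>w::real ^ 'n. (axis i w, 0)"])
  show "rank_deficient_pairs i K \<in> sets borel"
    by (intro borel_closed closed_rank_deficient_pairs)
  have "continuous_on UNIV (axis i :: real ^ 'n \<Rightarrow> real ^ 'n ^ 'm)"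
    by (rule continuous_on_axis[OF continuous_on_id])
  then show "(\<lambda>w::real ^ 'n. (axis i w, 0 :: real ^ 'm)) \<in> borel_measurable borel"
    by (intro borel_measurable_continuous_onI continuous_on_Pair continuous_on_const)
  fix u :: "(real ^ 'n ^ 'm) \<times> (real ^ 'm)"
  show "negligible {w. u + (axis i w, 0) \<in> rank_deficient_pairs i K}"
    using negligible_rank_deficient_section[OF assms] by (cases u) simp
qed

lemma null_sets_vanishing_coordinate_pairs:
  assumes "p > 1" "eps > 0"
  shows "(vanishing_coordinate_pairs p eps j K :: ((real ^ 'n ^ 'm) \<times> (real ^ 'm)) set)
           \<in> null_sets lborel"
proof (rule null_sets_lborel_if_translated_sections_negligible[where L = "\<lambda>v::real ^ 'm. (transpose (axis j v), 0)"])
  show "vanishing_coordinate_pairs p eps j K \<in> sets borel"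
    using assms by (intro borel_closed closed_vanishing_coordinate_pairs) simp
  have "continuous_on UNIV (\<lambda>v. transpose (axis j v) :: real ^ 'n ^ 'm)"
    by (rule continuous_on_transpose[OF continuous_on_axis[OF continuous_on_id]])
  then show "(\<lambda>v::real ^ 'm. (transpose (axis j v), 0 :: real ^ 'm)) \<in> borel_measurable borel"
    by (intro borel_measurable_continuous_onI continuous_on_Pair continuous_on_const)
  fix u :: "(real ^ 'n ^ 'm) \<times> (real ^ 'm)"
  show "negligible {v. u + (transpose (axis j v), 0) \<in> vanishing_coordinate_pairs p eps j K}"
    using negligible_vanishing_coordinate_section[OF assms] by (cases u) simp
qed

lemma surj_matrix_vector_mult:
  fixes A :: "real ^ 'n ^ 'm"
  assumes "\<And>v. v v* A = 0 \<Longrightarrow> v = 0"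
  shows "surj ((*v) A)"
proof -
  have "\<exists>B. B ** transpose A = mat 1"
    using assms by (simp add: matrix_left_invertible_ker)
  then show ?thesis
    using left_invertible_transpose matrix_right_invertible_surjective by blast
qed

lemma rank_deficient_pairsI:
  fixes A :: "real ^ 'n ^ 'm"
  assumes "v v* A = 0" "v \<noteq> 0"
  shows "\<exists>i K. (A, y) \<in> rank_deficient_pairs i K"
proof -
  obtain i where i: "v $ i \<noteq> 0" using assms(2) by (metis vec_eq_iff zero_index)
  define u where "u = (1 / v $ i) *\<^sub>R v"
  have "u v* A = (1 / v $ i) *\<^sub>R (v v* A)"
    unfolding u_def by (metis matrix_vector_mult_scaleR transpose_matrix_vector)
  then have "u $ i = 1" "u v* A = 0"
    using i assms(1) by (simp_all add: u_def)
  moreover have "norm u \<le> real (nat \<lceil>norm u\<rceil>)"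
    by (rule real_nat_ceiling_ge)
  ultimately show ?thesis
    unfolding rank_deficient_pairs_def by blast
qed

lemma vanishing_coordinate_pairsI:
  fixes A :: "real ^ 'n ^ 'm"
  assumes p: "p > 1" and y: "norm y > eps" and x: "lp_opt p eps A y x" and xj: "x $ j = 0"
  shows "\<exists>K. (A, y) \<in> vanishing_coordinate_pairs p eps j K"
proof -
  have "restricted_opt p eps j A y x"
    using xj lp_opt_residual_eq[OF p y x] x p by (auto simp: restricted_opt_def lp_opt_iff)
  moreover have "norm x \<le> real (nat \<lceil>norm x\<rceil>)"
    by (rule real_nat_ceiling_ge)
  ultimately show ?thesis
    using lp_opt_column_orthogonal[OF p y x xj] unfolding vanishing_coordinate_pairs_def by blast
qed

lemma lp_opt_unique_full_support:
  fixes A :: "real ^ 'n ^ 'm"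
  assumes p: "p > 1" and eps: "eps > 0" and y: "norm y > eps"
    and not_rank_deficient: "\<And>i K. (A, y) \<notin> rank_deficient_pairs i K"
    and not_vanishing: "\<And>j K. (A, y) \<notin> vanishing_coordinate_pairs p eps j K"
  shows "(\<exists>!x. lp_opt p eps A y x) \<and> (\<forall>x. lp_opt p eps A y x \<longrightarrow> card (supp x) = CARD('n))"
proof -
  have "v = 0" if "v v* A = 0" for v
    using rank_deficient_pairsI[OF that] not_rank_deficient by metis
  then obtain x0 where "A *v x0 = y"
    using surj_matrix_vector_mult by (metis surjD)
  then obtain x where x: "lp_opt p eps A y x"
    using lp_opt_exists[of p A x0 y eps] p eps by auto
  have "supp x = UNIV" if "lp_opt p eps A y x" for x
    using vanishing_coordinate_pairsI[OF p y that] not_vanishing by (auto simp: supp_def)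
  then show ?thesis
    using x lp_opt_unique[OF p] by auto
qed

theorem theorem4p4:
  fixes p eps :: real
  assumes "p > 1" and "CARD('n::finite) \<ge> CARD('m::finite)" and "eps > 0"
  shows "AE Ay in (lborel :: ((real ^ 'n ^ 'm) \<times> (real ^ 'm)) measure).
           norm (snd Ay) > eps \<longrightarrow>
             (\<exists>!x. lp_opt p eps (fst Ay) (snd Ay) x) \<and>
             (\<forall>x. lp_opt p eps (fst Ay) (snd Ay) x \<longrightarrow> card (supp x) = CARD('n))"
proof -
  have "AE q in (lborel :: ((real ^ 'n ^ 'm) \<times> (real ^ 'm)) measure).
          \<forall>i K. q \<notin> rank_deficient_pairs i K"
    using null_sets_rank_deficient_pairs[OF assms(2)]
    by (simp add: AE_all_countable AE_not_in)
  moreover have "AE q in (lborel :: ((real ^ 'n ^ 'm) \<times> (real ^ 'm)) measure).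
          \<forall>j K. q \<notin> vanishing_coordinate_pairs p eps j K"
    using null_sets_vanishing_coordinate_pairs[OF assms(1,3), where 'n = 'n and 'm = 'm]
    by (simp add: AE_all_countable AE_not_in)
  ultimately show ?thesis
  proof eventually_elim
    case (elim q)
    then show ?case
      using lp_opt_unique_full_support[OF assms(1,3), of "snd q" "fst q"] by simp
  qed
qed

end
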